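(* Let $n\ge1$, $B=\{0,1,\dots,n\}$ as below, $j\ge0$, $b\in B$, and let $(\mu_i)_{i\in B}\in\mathbb Z^{n+1}$ satisfy $\sum_{i\in B}\mu_i=j$. Put $\mu=(\mu_n-\mu_0)\Lambda_0+(\mu_0-\mu_1)\Lambda_1+\cdots+(\mu_{n-1}-\mu_n)\Lambda_n\in P_{cl}$. Then $$g_j(b,\mu)=q^{\frac12\sum_{i\in B}\mu_i(\mu_i-1)+\sum_{i\in B}H(b\otimes i)\mu_i}\begin{bmatrix}j\\ \mu\end{bmatrix}_q .$$
   Context: Affine algebra $A^{(1)}_n$ with fundamental weights $\Lambda_0,\dots,\Lambda_n$, $P_{cl}=\bigoplus\mathbb Z\Lambda_i$. $B=\{0,1,\dots,n\}$ with weights $wt(b)=\Lambda_{\overline{b+1}}-\Lambda_b$, where $\overline x\in\{0,\dots,n\}$, $\overline x\equiv x\pmod{n+1}$; energy function $H(b\otimes b')=0$ if $b<b'$ and $=1$ if $b\ge b'$. For $j\ge0$, $b\in B$, $\mu\in P_{cl}$: $g_j(b,\mu)=\sum q^{\sum_{i=1}^j iH(b_{i+1}\otimes b_i)}$, summed over $(b_j,\dots,b_1)\in B^j$ with $wt(b_j)+\cdots+wt(b_1)=\mu$, where $b_{j+1}=b$. For an integer vector $\gamma=(\gamma_b)_{b\in B}$: $\begin{bmatrix}j\\ \gamma\end{bmatrix}_q=(q)_j/\prod_{b\in B}(q)_{\gamma_b}$ if $\sum_b\gamma_b=j$ and all $\gamma_b\ge0$, and $0$ otherwise; $(q)_m=\prod_{i=1}^m(1-q^i)$.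 *)

theory Defs
  imports "HOL-Computational_Algebra.Formal_Laurent_Series"
begin

text \<open>Weights in P_cl are integer coefficient vectors \<open>nat \<Rightarrow> int\<close>:
  the value at k is the coefficient of Lambda_k (zero for k > n).\<close>

definition Lam :: "nat \<Rightarrow> nat \<Rightarrow> int" where
  "Lam k = (\<lambda>i. if i = k then 1 else 0)"

definition wt :: "nat \<Rightarrow> nat \<Rightarrow> (nat \<Rightarrow> int)" where
  "wt n b = (\<lambda>k. Lam ((b + 1) mod (n + 1)) k - Lam b k)"

definition H :: "nat \<Rightarrow> nat \<Rightarrow> nat" where
  "H b b' = (if b < b' then 0 else 1)"

text \<open>A path (b_j,...,b_1) is a list xs of length j with xs ! (i-1) = b_i;
  b_{j+1} = b.\<close>
definition pathelt :: "nat \<Rightarrow> nat list \<Rightarrow> nat \<Rightarrow> nat" where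
  "pathelt b xs i = (if i = length xs + 1 then b else xs ! (i - 1))"

definition g :: "nat \<Rightarrow> nat \<Rightarrow> nat \<Rightarrow> (nat \<Rightarrow> int) \<Rightarrow> rat fls" where
  "g n j b mu =
     (\<Sum>xs \<in> {xs. length xs = j \<and> set xs \<subseteq> {0..n} \<and> (\<lambda>k. \<Sum>i<j. wt n (xs ! i) k) = mu}.
        fls_X ^ (\<Sum>i=1..j. i * H (pathelt b xs (i + 1)) (pathelt b xs i)))"

definition qpoch :: "nat \<Rightarrow> rat fls" where
  "qpoch m = (\<Prod>i=1..m. 1 - fls_X ^ i)"

definition qmultinom :: "nat \<Rightarrow> nat \<Rightarrow> (nat \<Rightarrow> int) \<Rightarrow> rat fls" where
  "qmultinom n j \<gamma> =
     (if (\<Sum>b\<le>n. \<gamma> b) = int j \<and> (\<forall>b\<le>n. \<gamma> b \<ge> 0)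
      then qpoch j / (\<Prod>b\<le>n. qpoch (nat (\<gamma> b)))
      else 0)"

definition mu_cl :: "nat \<Rightarrow> (nat \<Rightarrow> int) \<Rightarrow> (nat \<Rightarrow> int)" where
  "mu_cl n m = (\<lambda>k. if k = 0 then m n - m 0 else if k \<le> n then m (k - 1) - m k else 0)"

end

theory Submission
  imports Defs
begin

(* Since wt(c) = mu(e_c), a path has weight mu(m) exactly when each letter i occurs m_i times:
   mu determines an integer vector up to a common shift, and the sum of the vector fixes the
   shift. So g_j(b, mu) is the energy generating function F_j(b, m) of the words with content m.
   Splitting off the letter c adjacent to b gives
     F_{j+1}(b, m) = sum_c q^((j+1) H(b, c)) F_j(c, m - e_c).
   After multiplying by prod_i (q)_{m_i} and inserting the claimed formula for F_j, the right-hand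
   side becomes a telescoping sum of q^((j+1) H(b, c)) (q^(m_0 + ... + m_(c-1)) - q^(m_0 + ... + m_c)),
   which equals q^(m_0 + ... + m_b) (1 - q^(j+1)). *)

lemma wt_eq_mu_cl_indicator:
  assumes "x \<le> n"
  shows "wt n x = mu_cl n (\<lambda>i. if i = x then 1 else 0)"
  using assms by (auto simp: wt_def mu_cl_def Lam_def fun_eq_iff mod_Suc)

lemma mu_cl_add: "mu_cl n (\<lambda>i. f i + h i) = (\<lambda>k. mu_cl n f k + mu_cl n h k)"
  by (auto simp: mu_cl_def fun_eq_iff)

lemma mu_cl_cong: "(\<And>i. i \<le> n \<Longrightarrow> f i = h i) \<Longrightarrow> mu_cl n f = mu_cl n h"
  by (auto simp: mu_cl_def fun_eq_iff)

lemma sum_wt_eq_mu_cl_count: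
  assumes "set xs \<subseteq> {0..n}"
  shows "(\<lambda>k. \<Sum>i<length xs. wt n (xs ! i) k) = mu_cl n (\<lambda>i. int (count_list xs i))"
  using assms
proof (induction xs)
  case Nil
  then show ?case by (auto simp: mu_cl_def fun_eq_iff)
next
  case (Cons x xs)
  have "(\<lambda>k. \<Sum>i<length (x # xs). wt n ((x # xs) ! i) k)
      = (\<lambda>k. wt n x k + (\<Sum>i<length xs. wt n (xs ! i) k))"
    by (simp only: length_Cons sum.lessThan_Suc_shift nth_Cons_0 nth_Cons_Suc)
  also have "\<dots> = mu_cl n (\<lambda>i. (if i = x then 1 else 0) + int (count_list xs i))"
    using Cons by (auto simp: wt_eq_mu_cl_indicator mu_cl_add fun_eq_iff)
  also have "\<dots> = mu_cl n (\<lambda>i. int (count_list (x # xs) i))"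
    by (rule arg_cong[where f = "mu_cl n"]) auto
  finally show ?case .
qed

lemma mu_cl_eq_imp_eq:
  fixes f h :: "nat \<Rightarrow> int"
  assumes "mu_cl n f = mu_cl n h" and "(\<Sum>i\<le>n. f i) = (\<Sum>i\<le>n. h i)" and "i \<le> n"
  shows "f i = h i"
proof -
  have diff_const: "f k - h k = f 0 - h 0" if "k \<le> n" for k
    using that
  proof (induction k)
    case (Suc k)
    have "mu_cl n f (Suc k) = mu_cl n h (Suc k)" using assms(1) by simp
    then show ?case using Suc by (simp add: mu_cl_def)
  qed simp
  have "of_nat (Suc n) * (f 0 - h 0) = (\<Sum>i\<le>n. f 0 - h 0)"
    by simp
  also have "\<dots> = (\<Sum>i\<le>n. f i - h i)"
    by (intro sum.cong refl) (metis atMost_iff diff_const)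
  also have "\<dots> = 0"
    using assms(2) by (simp add: sum_subtractf)
  finally have "f 0 = h 0"
    by simp
  then show ?thesis
    using diff_const[OF assms(3)] by linarith
qed

lemma sum_wt_eq_mu_cl_iff:
  assumes "set xs \<subseteq> {0..n}" and "(\<Sum>i\<le>n. m i) = int (length xs)"
  shows "(\<lambda>k. \<Sum>i<length xs. wt n (xs ! i) k) = mu_cl n m
    \<longleftrightarrow> (\<forall>i\<le>n. int (count_list xs i) = m i)"
proof -
  have "(\<Sum>i\<le>n. int (count_list xs i)) = int (\<Sum>i\<le>n. count_list xs i)"
    by simp
  also have "\<dots> = int (length xs)"
    using assms(1) by (subst sum_count_set) auto
  finally have count_sum: "(\<Sum>i\<le>n. int (count_list xs i)) = (\<Sum>i\<le>n. m i)"
    using assms(2) by simp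
  show ?thesis
    unfolding sum_wt_eq_mu_cl_count[OF assms(1)]
  proof
    assume "mu_cl n (\<lambda>i. int (count_list xs i)) = mu_cl n m"
    from mu_cl_eq_imp_eq[OF this count_sum] show "\<forall>i\<le>n. int (count_list xs i) = m i"
      by blast
  next
    assume "\<forall>i\<le>n. int (count_list xs i) = m i"
    then show "mu_cl n (\<lambda>i. int (count_list xs i)) = mu_cl n m"
      by (intro mu_cl_cong) simp
  qed
qed

definition energy :: "nat \<Rightarrow> nat list \<Rightarrow> nat" where
  "energy b xs = (\<Sum>i=1..length xs. i * H (pathelt b xs (i + 1)) (pathelt b xs i))"

lemma energy_snoc: "energy b (xs @ [c]) = (length xs + 1) * H b c + energy c xs"
proof -
  have "energy b (xs @ [c])
      = (\<Sum>i=1..length xs. i * H (pathelt b (xs @ [c]) (i + 1)) (pathelt b (xs @ [c]) i))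
        + (length xs + 1) * H b c"
    by (simp add: energy_def pathelt_def)
  also have "(\<Sum>i=1..length xs. i * H (pathelt b (xs @ [c]) (i + 1)) (pathelt b (xs @ [c]) i))
      = energy c xs"
    unfolding energy_def by (intro sum.cong refl) (auto simp: pathelt_def nth_append)
  finally show ?thesis by simp
qed

definition paths_with_content :: "nat \<Rightarrow> nat \<Rightarrow> (nat \<Rightarrow> nat) \<Rightarrow> nat list set" where
  "paths_with_content n j m =
     {xs. length xs = j \<and> set xs \<subseteq> {0..n} \<and> (\<forall>i\<le>n. count_list xs i = m i)}"

lemma finite_paths_with_content: "finite (paths_with_content n j m)"
  by (rule finite_subset[OF _ finite_lists_length_eq[of "{0..n}" j]])
     (auto simp: paths_with_content_def)

lemma paths_with_content_Suc:
  "paths_with_content n (Suc j) m =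
     (\<lambda>(c, ys). ys @ [c]) `
       (SIGMA c:{c. c \<le> n \<and> m c > 0}. paths_with_content n j (m(c := m c - 1)))"
proof (intro equalityI subsetI)
  fix xs assume xs: "xs \<in> paths_with_content n (Suc j) m"
  then obtain ys c where xs_eq: "xs = ys @ [c]"
    by (cases xs rule: rev_exhaust) (auto simp: paths_with_content_def)
  with xs have c: "c \<le> n" and m_c: "m c = count_list ys c + 1"
    by (auto simp: paths_with_content_def)
  with xs xs_eq have "ys \<in> paths_with_content n j (m(c := m c - 1))"
    by (auto simp: paths_with_content_def)
  with xs_eq c m_c show "xs \<in> (\<lambda>(c, ys). ys @ [c]) `
      (SIGMA c:{c. c \<le> n \<and> m c > 0}. paths_with_content n j (m(c := m c - 1)))"
    by (intro image_eqI[where x = "(c, ys)"]) auto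
qed (auto simp: paths_with_content_def split: if_splits)

definition energy_gf :: "nat \<Rightarrow> nat \<Rightarrow> nat \<Rightarrow> (nat \<Rightarrow> nat) \<Rightarrow> rat fls" where
  "energy_gf n j b m = (\<Sum>xs\<in>paths_with_content n j m. fls_X ^ energy b xs)"

lemma energy_gf_Suc:
  "energy_gf n (Suc j) b m =
     (\<Sum>c | c \<le> n \<and> m c > 0. fls_X ^ (Suc j * H b c) * energy_gf n j c (m(c := m c - 1)))"
proof -
  let ?C = "{c. c \<le> n \<and> m c > 0}"
  have inj: "inj_on (\<lambda>(c, ys). ys @ [c]) X" for X :: "(nat \<times> nat list) set"
    by (auto simp: inj_on_def)
  have "energy_gf n (Suc j) b m =
      (\<Sum>(c, ys)\<in>(SIGMA c:?C. paths_with_content n j (m(c := m c - 1))). fls_X ^ energy b (ys @ [c]))"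
    unfolding energy_gf_def paths_with_content_Suc sum.reindex[OF inj]
    by (simp add: case_prod_beta)
  also have "\<dots> = (\<Sum>c\<in>?C. \<Sum>ys\<in>paths_with_content n j (m(c := m c - 1)). fls_X ^ energy b (ys @ [c]))"
    by (rule sum.Sigma[symmetric]) (auto simp: finite_paths_with_content)
  also have "\<dots> = (\<Sum>c\<in>?C. fls_X ^ (Suc j * H b c) * energy_gf n j c (m(c := m c - 1)))"
    unfolding energy_gf_def sum_distrib_left
    by (intro sum.cong refl) (auto simp: energy_snoc paths_with_content_def power_add)
  finally show ?thesis .
qed

lemma qpoch_Suc: "qpoch (Suc k) = qpoch k * (1 - fls_X ^ Suc k)"
  by (simp add: qpoch_def prod.cl_ivl_Suc)

lemma qpoch_nonzero: "qpoch k \<noteq> 0"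
proof -
  have "(1 - fls_X ^ i :: rat fls) \<noteq> 0" if "i \<ge> 1" for i
  proof
    assume "(1 - fls_X ^ i :: rat fls) = 0"
    then have "fls_nth (1 - fls_X ^ i :: rat fls) 0 = 0"
      by simp
    with that show False
      by simp
  qed
  then show ?thesis
    by (simp add: qpoch_def)
qed

definition qpoch_prod :: "nat \<Rightarrow> (nat \<Rightarrow> nat) \<Rightarrow> rat fls" where
  "qpoch_prod n m = (\<Prod>i\<le>n. qpoch (m i))"

lemma qpoch_prod_nonzero: "qpoch_prod n m \<noteq> 0"
  by (simp add: qpoch_prod_def qpoch_nonzero)

lemma qpoch_prod_upd_minus_one:
  assumes "c \<le> n" and "m c > 0"
  shows "qpoch_prod n m = qpoch_prod n (m(c := m c - 1)) * (1 - fls_X ^ m c)"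
proof -
  have "qpoch (m c) = qpoch (m c - 1) * (1 - fls_X ^ m c)"
    using assms(2) qpoch_Suc[of "m c - 1"] by simp
  moreover have "(\<Prod>i\<in>{..n} - {c}. qpoch ((m(c := m c - 1)) i)) = (\<Prod>i\<in>{..n} - {c}. qpoch (m i))"
    by (intro prod.cong) auto
  ultimately show ?thesis
    using assms(1) by (simp add: qpoch_prod_def prod.remove[of "{..n}" c] ac_simps)
qed

lemma sum_upd_minus_one:
  fixes m :: "nat \<Rightarrow> nat"
  assumes "c \<le> n" and "m c > 0"
  shows "(\<Sum>i\<le>n. (m(c := m c - 1)) i) + 1 = (\<Sum>i\<le>n. m i)"
proof -
  have "(\<Sum>i\<in>{..n} - {c}. (m(c := m c - 1)) i) = (\<Sum>i\<in>{..n} - {c}. m i)"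
    by (intro sum.cong) auto
  then show ?thesis
    using assms by (simp add: sum.remove[of "{..n}" c])
qed

lemma sum_choose2_upd_minus_one:
  fixes m :: "nat \<Rightarrow> nat"
  assumes "c \<le> n" and "m c > 0"
  shows "(\<Sum>i\<le>n. (m(c := m c - 1)) i choose 2) + (m c - 1) = (\<Sum>i\<le>n. m i choose 2)"
proof -
  have "m c choose 2 = (m c - 1 choose 2) + (m c - 1)"
    using assms(2) by (cases "m c") (simp_all add: numeral_2_eq_2)
  moreover have "(\<Sum>i\<in>{..n} - {c}. (m(c := m c - 1)) i choose 2) = (\<Sum>i\<in>{..n} - {c}. m i choose 2)"
    by (intro sum.cong) auto
  ultimately show ?thesis
    using assms(1) by (simp add: sum.remove[of "{..n}" c])
qed

lemma sum_telescope_weighted: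
  fixes f :: "nat \<Rightarrow> 'a::comm_ring_1"
  assumes "b \<le> n"
  shows "(\<Sum>c\<le>n. (if b < c then 1 else y) * (f c - f (Suc c)))
    = y * (f 0 - f (Suc b)) + (f (Suc b) - f (Suc n))"
  using assms
proof (induction n rule: dec_induct)
  case base
  have "(\<Sum>c\<le>b. (if b < c then 1 else y) * (f c - f (Suc c))) = y * (\<Sum>c\<le>b. f c - f (Suc c))"
    by (simp add: sum_distrib_left)
  then show ?case
    by (simp add: sum_telescope)
next
  case (step n)
  then show ?case
    by (simp add: algebra_simps)
qed

lemma sum_H_telescope_powers:
  fixes x :: "'a::comm_ring_1" and m :: "nat \<Rightarrow> nat"
  assumes "b \<le> n" and "(\<Sum>i\<le>n. m i) = Suc j"
  shows "(\<Sum>c\<le>n. x ^ (Suc j * H b c) * (x ^ (\<Sum>i<c. m i) - x ^ (\<Sum>i<Suc c. m i)))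
    = x ^ (\<Sum>i\<le>b. m i) * (1 - x ^ Suc j)"
proof -
  have "(\<Sum>c\<le>n. x ^ (Suc j * H b c) * (x ^ (\<Sum>i<c. m i) - x ^ (\<Sum>i<Suc c. m i)))
      = (\<Sum>c\<le>n. (if b < c then 1 else x ^ Suc j) * (x ^ (\<Sum>i<c. m i) - x ^ (\<Sum>i<Suc c. m i)))"
    by (intro sum.cong refl) (simp add: H_def)
  also have "\<dots> = x ^ Suc j * (1 - x ^ (\<Sum>i\<le>b. m i)) + (x ^ (\<Sum>i\<le>b. m i) - x ^ Suc j)"
    using sum_telescope_weighted[OF assms(1), where y = "x ^ Suc j" and f = "\<lambda>c. x ^ (\<Sum>i<c. m i)"] assms(2)
    by (simp add: lessThan_Suc_atMost)
  finally show ?thesis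
    by (simp add: algebra_simps)
qed

lemma energy_gf_mult_qpoch_prod_upd:
  fixes m :: "nat \<Rightarrow> nat"
  assumes "c \<le> n" and "m c > 0"
    and "energy_gf n j c (m(c := m c - 1)) * qpoch_prod n (m(c := m c - 1))
      = fls_X ^ ((\<Sum>i\<le>n. (m(c := m c - 1)) i choose 2) + (\<Sum>i\<le>c. (m(c := m c - 1)) i)) * qpoch j"
  shows "energy_gf n j c (m(c := m c - 1)) * qpoch_prod n m
    = fls_X ^ ((\<Sum>i\<le>n. m i choose 2) + (\<Sum>i<c. m i)) * qpoch j * (1 - fls_X ^ m c)"
proof -
  let ?m' = "m(c := m c - 1)"
  have "(\<Sum>i\<le>c. ?m' i) = (\<Sum>i<c. m i) + (m c - 1)"
    by (simp add: lessThan_Suc_atMost[symmetric])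
  then have exponent: "(\<Sum>i\<le>n. ?m' i choose 2) + (\<Sum>i\<le>c. ?m' i) = (\<Sum>i\<le>n. m i choose 2) + (\<Sum>i<c. m i)"
    using sum_choose2_upd_minus_one[of c n m, OF assms(1,2)] by simp
  have "energy_gf n j c ?m' * qpoch_prod n m = energy_gf n j c ?m' * qpoch_prod n ?m' * (1 - fls_X ^ m c)"
    by (simp add: qpoch_prod_upd_minus_one[of c n m, OF assms(1,2)] ac_simps)
  also have "\<dots> = fls_X ^ ((\<Sum>i\<le>n. m i choose 2) + (\<Sum>i<c. m i)) * qpoch j * (1 - fls_X ^ m c)"
    by (simp only: assms(3) exponent)
  finally show ?thesis .
qed

lemma energy_gf_mult_qpoch_prod:
  assumes "b \<le> n" and "(\<Sum>i\<le>n. m i) = j"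
  shows "energy_gf n j b m * qpoch_prod n m
    = fls_X ^ ((\<Sum>i\<le>n. m i choose 2) + (\<Sum>i\<le>b. m i)) * qpoch j"
  using assms
proof (induction j arbitrary: b m)
  case 0
  then have "\<forall>i\<le>n. m i = 0"
    by simp
  moreover from this have "paths_with_content n 0 m = {[]}"
    by (auto simp: paths_with_content_def)
  ultimately show ?case
    using "0.prems"(1) by (simp add: energy_gf_def energy_def qpoch_prod_def qpoch_def binomial_eq_0)
next
  case (Suc j)
  define Q where "Q = (\<Sum>i\<le>n. m i choose 2)"
  define \<delta> :: "nat \<Rightarrow> rat fls"
    where "\<delta> c = fls_X ^ (Suc j * H b c) * (fls_X ^ (\<Sum>i<c. m i) - fls_X ^ (\<Sum>i<Suc c. m i))" for c
  have summand_eq: "fls_X ^ (Suc j * H b c) * energy_gf n j c (m(c := m c - 1)) * qpoch_prod n m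
      = fls_X ^ Q * qpoch j * \<delta> c"
    if c: "c \<le> n" "m c > 0" for c
  proof -
    have "(\<Sum>i\<le>n. (m(c := m c - 1)) i) = j"
      using sum_upd_minus_one[of c n m, OF c] Suc.prems(2) by simp
    note lifted = energy_gf_mult_qpoch_prod_upd[of c n m, OF c Suc.IH[OF c(1) this]]
    have "fls_X ^ (Suc j * H b c) * energy_gf n j c (m(c := m c - 1)) * qpoch_prod n m
        = fls_X ^ (Suc j * H b c) * (fls_X ^ (Q + (\<Sum>i<c. m i)) * qpoch j * (1 - fls_X ^ m c))"
      by (simp only: mult.assoc lifted Q_def)
    also have "\<dots> = fls_X ^ Q * qpoch j * \<delta> c"
      by (simp add: \<delta>_def power_add algebra_simps)
    finally show ?thesis .
  qed
  have zero_summands: "(\<Sum>c | c \<le> n \<and> m c > 0. \<delta> c) = (\<Sum>c\<le>n. \<delta> c)"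
    by (rule sum.mono_neutral_left) (auto simp: \<delta>_def)
  have "energy_gf n (Suc j) b m * qpoch_prod n m = (\<Sum>c | c \<le> n \<and> m c > 0. fls_X ^ Q * qpoch j * \<delta> c)"
    unfolding energy_gf_Suc sum_distrib_right by (intro sum.cong refl summand_eq) auto
  also have "\<dots> = fls_X ^ Q * qpoch j * (\<Sum>c\<le>n. \<delta> c)"
    by (simp only: sum_distrib_left[symmetric] zero_summands)
  also have "\<dots> = fls_X ^ (Q + (\<Sum>i\<le>b. m i)) * qpoch (Suc j)"
    unfolding \<delta>_def sum_H_telescope_powers[OF Suc.prems] qpoch_Suc by (simp add: power_add ac_simps)
  finally show ?case
    by (simp add: Q_def)
qed

lemma g_mu_cl_eq_sum_paths:
  assumes "(\<Sum>i\<le>n. m i) = int j"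
  shows "g n j b (mu_cl n m) =
    (\<Sum>xs | length xs = j \<and> set xs \<subseteq> {0..n} \<and> (\<forall>i\<le>n. int (count_list xs i) = m i).
       fls_X ^ energy b xs)"
proof -
  have "{xs. length xs = j \<and> set xs \<subseteq> {0..n} \<and> (\<lambda>k. \<Sum>i<j. wt n (xs ! i) k) = mu_cl n m}
      = {xs. length xs = j \<and> set xs \<subseteq> {0..n} \<and> (\<forall>i\<le>n. int (count_list xs i) = m i)}"
    using sum_wt_eq_mu_cl_iff[of _ n m] assms by auto
  then show ?thesis
    by (simp add: g_def energy_def)
qed

lemma g_mu_cl_eq_0_if_negative:
  assumes "(\<Sum>i\<le>n. m i) = int j" and "i \<le> n" and "m i < 0"
  shows "g n j b (mu_cl n m) = 0"
proof -
  have "{xs. length xs = j \<and> set xs \<subseteq> {0..n} \<and> (\<forall>i\<le>n. int (count_list xs i) = m i)} = {}"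
    using assms(2,3) by force
  then show ?thesis
    by (simp only: g_mu_cl_eq_sum_paths[OF assms(1)] sum.empty)
qed

lemma g_mu_cl_of_nat:
  assumes "b \<le> n" and "(\<Sum>i\<le>n. k i) = j"
  shows "g n j b (mu_cl n (\<lambda>i. int (k i)))
    = fls_X ^ ((\<Sum>i\<le>n. k i choose 2) + (\<Sum>i\<le>b. k i)) * qpoch j / qpoch_prod n k"
proof -
  have "(\<Sum>i\<le>n. int (k i)) = int j"
    unfolding assms(2)[symmetric] by simp
  then have "g n j b (mu_cl n (\<lambda>i. int (k i))) = energy_gf n j b k"
    by (simp add: g_mu_cl_eq_sum_paths energy_gf_def paths_with_content_def)
  then show ?thesis
    using energy_gf_mult_qpoch_prod[OF assms] qpoch_prod_nonzero[of n k]
    by (simp add: field_simps)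
qed

lemma sum_of_nat_H_mult:
  fixes f :: "nat \<Rightarrow> 'a::semiring_1"
  assumes "b \<le> n"
  shows "(\<Sum>i\<le>n. of_nat (H b i) * f i) = (\<Sum>i\<le>b. f i)"
  using assms by (induction n rule: dec_induct) (auto simp: H_def intro: sum.cong)

lemma int_times_pred_eq_choose2: "int k * (int k - 1) = 2 * int (k choose 2)"
  by (induction k) (simp_all add: numeral_2_eq_2 algebra_simps)

theorem mainTheorem12:
  fixes n j b :: nat and m :: "nat \<Rightarrow> int"
  assumes "n \<ge> 1" and "b \<le> n"
    and "(\<Sum>i\<le>n. m i) = int j"
  shows "g n j b (mu_cl n m) =
    (fls_X :: rat fls) powi
      ((\<Sum>i\<le>n. m i * (m i - 1)) div 2 + (\<Sum>i\<le>n. int (H b i) * m i))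
    * qmultinom n j m"
proof (cases "\<forall>i\<le>n. m i \<ge> 0")
  case False
  then obtain i where "i \<le> n" "m i < 0"
    by auto
  then show ?thesis
    using g_mu_cl_eq_0_if_negative[OF assms(3)] by (auto simp: qmultinom_def)
next
  case True
  define k where "k i = nat (m i)" for i
  have m_eq: "m i = int (k i)" if "i \<le> n" for i
    using True that by (simp add: k_def)
  have k_sum: "(\<Sum>i\<le>n. k i) = j"
    using assms(3) by (simp add: m_eq flip: of_nat_sum)
  have exponent: "(\<Sum>i\<le>n. m i * (m i - 1)) div 2 + (\<Sum>i\<le>n. int (H b i) * m i)
      = int ((\<Sum>i\<le>n. k i choose 2) + (\<Sum>i\<le>b. k i))"
    using assms(2) by (simp add: m_eq int_times_pred_eq_choose2 sum_of_nat_H_mult flip: sum_distrib_left)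
  have qmultinom_eq: "qmultinom n j m = qpoch j / qpoch_prod n k"
    using True assms(3) by (simp add: qmultinom_def qpoch_prod_def k_def)
  have mu_cl_eq: "mu_cl n m = mu_cl n (\<lambda>i. int (k i))"
    by (rule mu_cl_cong) (simp add: m_eq)
  show ?thesis
    unfolding exponent qmultinom_eq mu_cl_eq g_mu_cl_of_nat[OF assms(2) k_sum] power_int_of_nat
    by (simp only: times_divide_eq_right)
qed

end
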